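(* Let $N=pq$ with $p,q$ distinct primes. Let $d\in\mathbb{N}$ and $b_1,\dots,b_d\in\mathbb{Z}$. For each $i$ let $f_i=l_iX+c_i\in\mathbb{Z}[X]$ be a polynomial of degree $1$ with $f_i(b_i)=N$. If $\gcd(c_i,N)=1$ for every $i$ and $\gcd(b_j-b_k,N)=1$ for all $j,k\in\{1,\dots,d\}$ with $j\neq k$, then \[\nu\Big(\prod_{i=1}^d f_i\Big)=dp+dq-2d^2.\]
   Context: $Z_N=\{0,1,\dots,N-1\}$. For $g\in\mathbb{Z}[X]$, an element $x\in Z_N$ is called suitable for $g$ if $1<\gcd(g(x),N)<N$, and $\nu(g)$ denotes the number of $x\in Z_N$ suitable for $g$. *)

theory Defs
  imports "HOL-Computational_Algebra.Computational_Algebra"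
begin

definition suitable :: "nat \<Rightarrow> int poly \<Rightarrow> nat \<Rightarrow> bool" where
  "suitable N g x \<longleftrightarrow> x < N \<and> 1 < gcd (poly g (int x)) (int N) \<and> gcd (poly g (int x)) (int N) < int N"

definition nu :: "nat \<Rightarrow> int poly \<Rightarrow> nat" where
  "nu N g = card {x. x < N \<and> suitable N g x}"

end

theory Submission
  imports Defs "HOL-Number_Theory.Cong"
begin

text \<open>Since \<open>N = pq\<close>, a value \<open>v\<close> has \<open>1 < gcd(v, N) < N\<close> exactly when one of \<open>p, q\<close>
divides \<open>v\<close> and the other does not. Each \<open>f\<^sub>i\<close> vanishes at \<open>b\<^sub>i\<close> modulo \<open>N\<close> and its leading
coefficient is a unit modulo \<open>p\<close> and \<open>q\<close>, so \<open>p\<close> divides \<open>\<Prod>f\<^sub>i(x)\<close> iff \<open>x\<close> lies in the set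
\<open>R\<^sub>p\<close> of residues of the \<open>b\<^sub>i\<close> modulo \<open>p\<close>, which has \<open>d\<close> elements because the \<open>b\<^sub>i\<close> are
pairwise incongruent; likewise for \<open>q\<close>. By the Chinese remainder theorem the suitable
\<open>x\<close> correspond to the pairs in \<open>R\<^sub>p \<times> (Z\<^sub>q - R\<^sub>q) \<union> (Z\<^sub>p - R\<^sub>p) \<times> R\<^sub>q\<close>, of which there are
\<open>d(q - d) + (p - d)d\<close>.\<close>

lemma prime_not_dvd_if_gcd_eq_1:
  fixes p a n :: int
  assumes "prime p" "p dvd n" "gcd a n = 1"
  shows "\<not> p dvd a"
  using assms by (metis gcd_greatest is_unit_gcd not_prime_unit)

lemma gcd_strictly_between_iff:
  fixes p q :: nat and v :: int
  assumes "prime p" "prime q" "p \<noteq> q"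
  shows "1 < gcd v (int (p * q)) \<and> gcd v (int (p * q)) < int (p * q)
           \<longleftrightarrow> (int p dvd v) \<noteq> (int q dvd v)"
proof -
  have pp: "prime (int p)" and qq: "prime (int q)" using assms(1,2) by auto
  have cop: "coprime (int p) (int q)" using assms by (simp add: primes_coprime)
  have N_pos: "int (p * q) > 0" using assms(1,2) prime_gt_0_nat by simp
  have coprime_iff: "coprime v r \<longleftrightarrow> \<not> r dvd v" if "prime r" for r :: int
    using that by (metis coprime_absorb_right coprime_commute not_prime_unit prime_imp_coprime_int)
  have "gcd v (int (p * q)) = 1 \<longleftrightarrow> coprime v (int p) \<and> coprime v (int q)"
    by (simp add: coprime_iff_gcd_eq_1[symmetric])
  also have "\<dots> \<longleftrightarrow> \<not> int p dvd v \<and> \<not> int q dvd v"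
    using coprime_iff pp qq by blast
  finally have gt_1: "1 < gcd v (int (p * q)) \<longleftrightarrow> int p dvd v \<or> int q dvd v"
    using N_pos gcd_ge_0_int[of v "int (p * q)"] by (smt (verit) gcd_eq_0_iff)
  have "int (p * q) dvd v \<longleftrightarrow> int p dvd v \<and> int q dvd v"
    using cop divides_mult[of "int p" v "int q"] by (auto intro: dvd_mult_left dvd_mult_right)
  moreover have "gcd v (int (p * q)) \<le> int (p * q)" using N_pos by (simp add: zdvd_imp_le)
  moreover have "gcd v (int (p * q)) = int (p * q) \<longleftrightarrow> int (p * q) dvd v"
    using N_pos by (metis gcd_unique_int dvd_refl less_le_not_le)
  ultimately have lt_N: "gcd v (int (p * q)) < int (p * q) \<longleftrightarrow> \<not> (int p dvd v \<and> int q dvd v)"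
    by linarith
  show ?thesis using gt_1 lt_N by blast
qed

lemma prime_dvd_poly_degree_one_iff:
  fixes f :: "int poly" and p :: int
  assumes "prime p" "degree f = 1" "p dvd poly f b" "\<not> p dvd coeff f 0"
  shows "p dvd poly f x \<longleftrightarrow> p dvd x - b"
proof -
  have poly_f: "poly f y = coeff f 0 + coeff f 1 * y" for y
    using assms(2) by (simp add: poly_altdef)
  have "\<not> p dvd coeff f 1"
  proof
    assume "p dvd coeff f 1"
    then have "p dvd poly f b - coeff f 1 * b" using assms(3) by simp
    with assms(4) show False by (simp add: poly_f)
  qed
  have "poly f x = poly f b + coeff f 1 * (x - b)"
    by (simp add: poly_f algebra_simps)
  then have "p dvd poly f x \<longleftrightarrow> p dvd coeff f 1 * (x - b)"
    using assms(3) by (simp add: dvd_add_right_iff)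
  also have "\<dots> \<longleftrightarrow> p dvd x - b"
    using \<open>\<not> p dvd coeff f 1\<close> assms(1) by (simp add: prime_dvd_mult_iff)
  finally show ?thesis .
qed

lemma int_dvd_diff_iff_mod_eq:
  fixes p x :: nat and c :: int
  assumes "p > 0"
  shows "int p dvd int x - c \<longleftrightarrow> x mod p = nat (c mod int p)"
proof -
  have "int p dvd int x - c \<longleftrightarrow> int (x mod p) = c mod int p"
    by (simp add: mod_eq_dvd_iff zmod_int)
  also have "\<dots> \<longleftrightarrow> x mod p = nat (c mod int p)" using assms by auto
  finally show ?thesis .
qed

lemma prime_dvd_prod_degree_one_iff:
  fixes p :: nat and f :: "'i \<Rightarrow> int poly" and b :: "'i \<Rightarrow> int"
  assumes "prime p" "finite I"
    and "\<And>i. i \<in> I \<Longrightarrow> degree (f i) = 1"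
    and "\<And>i. i \<in> I \<Longrightarrow> int p dvd poly (f i) (b i)"
    and "\<And>i. i \<in> I \<Longrightarrow> \<not> int p dvd coeff (f i) 0"
  shows "int p dvd poly (\<Prod>i\<in>I. f i) (int x) \<longleftrightarrow> x mod p \<in> (\<lambda>i. nat (b i mod int p)) ` I"
proof -
  have "int p dvd poly (\<Prod>i\<in>I. f i) (int x) \<longleftrightarrow> (\<exists>i\<in>I. int p dvd poly (f i) (int x))"
    using assms(1,2) by (simp add: poly_prod prime_dvd_prod_iff)
  also have "\<dots> \<longleftrightarrow> (\<exists>i\<in>I. int p dvd int x - b i)"
    using prime_dvd_poly_degree_one_iff[of "int p"] assms by (intro bex_cong) auto
  also have "\<dots> \<longleftrightarrow> (\<exists>i\<in>I. x mod p = nat (b i mod int p))"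
    using int_dvd_diff_iff_mod_eq prime_gt_0_nat[OF assms(1)] by simp
  finally show ?thesis by blast
qed

lemma card_residues_mod_prime:
  fixes p :: nat and b :: "'i \<Rightarrow> int"
  assumes "prime p" "\<And>j k. j \<in> I \<Longrightarrow> k \<in> I \<Longrightarrow> j \<noteq> k \<Longrightarrow> \<not> int p dvd b j - b k"
  shows "card ((\<lambda>i. nat (b i mod int p)) ` I) = card I"
proof (rule card_image, rule inj_onI, rule ccontr)
  fix j k assume "j \<in> I" "k \<in> I" "nat (b j mod int p) = nat (b k mod int p)" "j \<noteq> k"
  moreover have "int p > 0" using prime_gt_0_nat[OF assms(1)] by simp
  ultimately have "int p dvd b j - b k"
    by (simp add: mod_eq_dvd_iff[symmetric] nat_eq_iff2)
  with assms(2) \<open>j \<in> I\<close> \<open>k \<in> I\<close> \<open>j \<noteq> k\<close> show False by blast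
qed

lemma bij_betw_mod_pair:
  fixes m n :: nat
  assumes "coprime m n"
  shows "bij_betw (\<lambda>x. (x mod m, x mod n)) {..<m * n} ({..<m} \<times> {..<n})"
proof -
  have inj: "inj_on (\<lambda>x. (x mod m, x mod n)) {..<m * n}"
  proof (rule inj_onI)
    fix x y assume xy: "x \<in> {..<m * n}" "y \<in> {..<m * n}" "(x mod m, x mod n) = (y mod m, y mod n)"
    then have "[x = y] (mod m)" "[x = y] (mod n)" by (auto simp: cong_def)
    with assms have "[x = y] (mod m * n)" by (simp add: coprime_cong_mult_nat)
    with xy show "x = y" by (auto simp: cong_less_imp_eq_nat)
  qed
  moreover have "(\<lambda>x. (x mod m, x mod n)) ` {..<m * n} \<subseteq> {..<m} \<times> {..<n}"
    by (auto, (metis mod_less_divisor mult_eq_0_iff neq0_conv not_less_zero)+)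
  moreover have "card ((\<lambda>x. (x mod m, x mod n)) ` {..<m * n}) = card ({..<m} \<times> {..<n})"
    using card_image[OF inj] by (simp add: card_cartesian_product)
  ultimately show ?thesis
    by (simp add: bij_betw_def card_subset_eq)
qed

lemma card_mod_pair_exclusive:
  fixes m n :: nat
  assumes "coprime m n" "A \<subseteq> {..<m}" "B \<subseteq> {..<n}"
  shows "card {x. x < m * n \<and> (x mod m \<in> A) \<noteq> (x mod n \<in> B)}
           = card A * (n - card B) + (m - card A) * card B"
proof -
  define g where "g = (\<lambda>x. (x mod m, x mod n))"
  let ?X = "{x \<in> {..<m * n}. (fst (g x) \<in> A) \<noteq> (snd (g x) \<in> B)}"
  have bij: "bij_betw g {..<m * n} ({..<m} \<times> {..<n})"
    using bij_betw_mod_pair[OF assms(1)] by (simp add: g_def)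
  have fin: "finite A" "finite B" using assms(2,3) finite_subset by auto
  have "card ?X = card (g ` ?X)"
    using bij_betw_imp_inj_on[OF bij] by (intro card_image[symmetric]) (rule inj_on_subset, auto)
  also have "card (g ` ?X) = card {y \<in> g ` {..<m * n}. (fst y \<in> A) \<noteq> (snd y \<in> B)}"
    by (rule arg_cong[where f = card]) blast
  also have "\<dots> = card {y \<in> {..<m} \<times> {..<n}. (fst y \<in> A) \<noteq> (snd y \<in> B)}"
    using bij by (simp add: bij_betw_def)
  also have "\<dots> = card (A \<times> ({..<n} - B) \<union> ({..<m} - A) \<times> B)"
    using assms(2,3) by (intro arg_cong[where f = card]) auto
  also have "card (A \<times> ({..<n} - B) \<union> ({..<m} - A) \<times> B)
      = card A * (n - card B) + (m - card A) * card B"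
    using fin assms(2,3) by (subst card_Un_disjoint) (auto simp: card_cartesian_product card_Diff_subset)
  finally show ?thesis by (simp add: g_def)
qed

theorem theorem2p9:
  fixes p q N d :: nat and b :: "nat \<Rightarrow> int" and f :: "nat \<Rightarrow> int poly"
  assumes "prime p" and "prime q" and "p \<noteq> q" and "N = p * q"
    and "\<And>i. i \<in> {1..d} \<Longrightarrow> degree (f i) = 1"
    and "\<And>i. i \<in> {1..d} \<Longrightarrow> poly (f i) (b i) = int N"
    and "\<And>i. i \<in> {1..d} \<Longrightarrow> gcd (coeff (f i) 0) (int N) = 1"
    and "\<And>j k. j \<in> {1..d} \<Longrightarrow> k \<in> {1..d} \<Longrightarrow> j \<noteq> k \<Longrightarrow> gcd (b j - b k) (int N) = 1"
  shows "int (nu N (\<Prod>i\<in>{1..d}. f i)) = int d * int p + int d * int q - 2 * (int d)^2"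
proof -
  define R where "R r = (\<lambda>i. nat (b i mod int r)) ` {1..d}" for r
  have prime_factor: "prime r" "int r dvd int N" if "r \<in> {p, q}" for r
    using that assms(1,2,4) by auto
  have not_dvd_coprime: "\<not> int r dvd a" if "r \<in> {p, q}" "gcd a (int N) = 1" for r a
    using prime_not_dvd_if_gcd_eq_1[of "int r" "int N" a] prime_factor[OF that(1)] that(2) by simp
  have dvd_prod_iff: "int r dvd poly (\<Prod>i\<in>{1..d}. f i) (int x) \<longleftrightarrow> x mod r \<in> R r"
    if "r \<in> {p, q}" for r x
    unfolding R_def using prime_factor[OF that] not_dvd_coprime[OF that] assms(5-7)
    by (intro prime_dvd_prod_degree_one_iff) auto
  have card_R: "card (R r) = d" if "r \<in> {p, q}" for r
    unfolding R_def using card_residues_mod_prime[of r "{1..d}" b] prime_factor[OF that]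
      not_dvd_coprime[OF that] assms(8) by simp
  have R_sub: "R r \<subseteq> {..<r}" if "r \<in> {p, q}" for r
    unfolding R_def using prime_gt_0_nat[OF prime_factor(1)[OF that]] by (auto simp: nat_less_iff)
  have "nu N (\<Prod>i\<in>{1..d}. f i) = card {x. x < p * q \<and> (x mod p \<in> R p) \<noteq> (x mod q \<in> R q)}"
    unfolding nu_def suitable_def assms(4)
    using gcd_strictly_between_iff[OF assms(1-3)] dvd_prod_iff by auto
  also have "\<dots> = d * (q - d) + (p - d) * d"
    using card_mod_pair_exclusive[OF _ R_sub R_sub] assms(1-3) card_R by (simp add: primes_coprime)
  finally have "int (nu N (\<Prod>i\<in>{1..d}. f i)) = int d * (int q - int d) + (int p - int d) * int d"
    using card_mono[OF _ R_sub, of p] card_mono[OF _ R_sub, of q] card_R by (simp add: of_nat_diff)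
  then show ?thesis by (simp add: power2_eq_square algebra_simps)
qed

end
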